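(* Consider the single sampling experiment with inputs $p_A,q_A,p_B,q_B$ and $\Delta>0$, and let $B=\mathrm{Bad}_\Delta(\tau,\nu_A)\cup\mathrm{Bad}_\Delta(\tau,\nu_B)$ and $\gamma=\tau(B)$. Then: 1. Alice accepts with probability exactly $\frac{1}{|\mathcal{U}|2^\Delta}$, and so does Bob. 2. The probability that the experiment is accepted is at most $\frac{1}{|\mathcal{U}|2^{2\Delta}}$ and at least $\frac{1-\gamma}{|\mathcal{U}|2^{2\Delta}}$. 3. If the experiment is accepted with positive probability and $\tau'$ denotes the distribution of its output conditioned on it being accepted, then $|\tau-\tau'|\le\gamma$.
   Context: $\mathcal{U}$ is a finite set and $p_A,q_A,p_B,q_B:\mathcal{U}\to[0,1]$ are such that $\tau=p_Ap_B$, $\nu_A=p_Aq_A$, $\nu_B=p_Bq_B$ (pointwise products) are probability distributions on $\mathcal{U}$. Single sampling experiment with parameter $\Delta>0$: using shared randomness, sample $u$ uniformly from $\mathcal{U}$ and $\alpha,\beta$ independently and uniformly from $[0,2^\Delta]$. Alice accepts if $\alpha\le p_A(u)$ and $\beta\le2^\Delta q_A(u)$. Bob accepts if $\alpha\le2^\Delta q_B(u)$ and $\beta\le p_B(u)$. If both accept, the experiment is accepted and its output is $u$; otherwise the output is $\bot$. For distributions $\tau,\nu$ on $\mathcal{U}$, $\mathrm{Bad}_\Delta(\tau,\nu)=\{u\in\mathcal{U}: 2^\Delta\nu(u)<\tau(u)\}$. Statistical distance: $|\mu-\nu|=\max_{T\subseteq\mathcal{U}}(\mu(T)-\nu(T))$.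 *)

theory Defs
  imports "HOL-Probability.Probability"
begin

definition exp_space :: "'a set \<Rightarrow> real \<Rightarrow> ('a \<times> real \<times> real) measure" where
  "exp_space U \<Delta> = measure_pmf (pmf_of_set U) \<Otimes>\<^sub>M
     (uniform_measure lborel {0..2 powr \<Delta>} \<Otimes>\<^sub>M uniform_measure lborel {0..2 powr \<Delta>})"

definition alice_acc :: "real \<Rightarrow> ('a \<Rightarrow> real) \<Rightarrow> ('a \<Rightarrow> real) \<Rightarrow> ('a \<times> real \<times> real) set" where
  "alice_acc \<Delta> pA qA = {(u, \<alpha>, \<beta>). \<alpha> \<le> pA u \<and> \<beta> \<le> 2 powr \<Delta> * qA u}"

definition bob_acc :: "real \<Rightarrow> ('a \<Rightarrow> real) \<Rightarrow> ('a \<Rightarrow> real) \<Rightarrow> ('a \<times> real \<times> real) set" where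
  "bob_acc \<Delta> pB qB = {(u, \<alpha>, \<beta>). \<alpha> \<le> 2 powr \<Delta> * qB u \<and> \<beta> \<le> pB u}"

definition exp_acc :: "real \<Rightarrow> ('a \<Rightarrow> real) \<Rightarrow> ('a \<Rightarrow> real) \<Rightarrow> ('a \<Rightarrow> real) \<Rightarrow> ('a \<Rightarrow> real)
    \<Rightarrow> ('a \<times> real \<times> real) set" where
  "exp_acc \<Delta> pA qA pB qB = alice_acc \<Delta> pA qA \<inter> bob_acc \<Delta> pB qB"

text \<open>Output of the experiment: Some u if accepted, None (bottom) otherwise.\<close>
definition exp_output :: "real \<Rightarrow> ('a \<Rightarrow> real) \<Rightarrow> ('a \<Rightarrow> real) \<Rightarrow> ('a \<Rightarrow> real) \<Rightarrow> ('a \<Rightarrow> real)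
    \<Rightarrow> 'a \<times> real \<times> real \<Rightarrow> 'a option" where
  "exp_output \<Delta> pA qA pB qB \<omega> = (if \<omega> \<in> exp_acc \<Delta> pA qA pB qB then Some (fst \<omega>) else None)"

definition cond_output :: "'a set \<Rightarrow> real \<Rightarrow> ('a \<Rightarrow> real) \<Rightarrow> ('a \<Rightarrow> real) \<Rightarrow> ('a \<Rightarrow> real) \<Rightarrow> ('a \<Rightarrow> real)
    \<Rightarrow> 'a \<Rightarrow> real" where
  "cond_output U \<Delta> pA qA pB qB u =
     measure (exp_space U \<Delta>) {\<omega> \<in> space (exp_space U \<Delta>). exp_output \<Delta> pA qA pB qB \<omega> = Some u}
     / measure (exp_space U \<Delta>) (exp_acc \<Delta> pA qA pB qB)"

definition is_distr :: "'a set \<Rightarrow> ('a \<Rightarrow> real) \<Rightarrow> bool" where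
  "is_distr U \<mu> \<longleftrightarrow> (\<forall>u\<in>U. 0 \<le> \<mu> u) \<and> sum \<mu> U = 1"

definition Bad :: "'a set \<Rightarrow> real \<Rightarrow> ('a \<Rightarrow> real) \<Rightarrow> ('a \<Rightarrow> real) \<Rightarrow> 'a set" where
  "Bad U \<Delta> \<tau> \<nu> = {u \<in> U. 2 powr \<Delta> * \<nu> u < \<tau> u}"

definition stat_dist :: "'a set \<Rightarrow> ('a \<Rightarrow> real) \<Rightarrow> ('a \<Rightarrow> real) \<Rightarrow> real" where
  "stat_dist U \<mu> \<nu> = Max ((\<lambda>T. sum \<mu> T - sum \<nu> T) ` Pow U)"

end

theory Submission
  imports Defs
begin

(* Write c = 2 powr Delta.  Every event considered in the theorem is a
   "rectangle event" {(u, alpha, beta). P u \<and> alpha \<le> a u \<and> beta \<le> b u} with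
   0 \<le> a u, b u \<le> c; since u is uniform on U and alpha, beta are independent and
   uniform on [0, c], such an event has probability (\<Sum>u | P u. a u * b u) / (|U| c^2).
   Alice's acceptance region is a rectangle event with a = pA, b = c qA, so its
   probability is c \<Sum> \<nu>A / (|U| c^2) = 1 / (|U| c); symmetrically for Bob.  The joint
   acceptance region is the rectangle event with a = min pA (c qB), b = min (c qA) pB,
   whose weight w u = a u * b u satisfies 0 \<le> w \<le> \<tau>, and w = \<tau> off the bad set B.
   Hence 1 - \<tau>(B) \<le> \<Sum> w \<le> 1, which gives the two bounds on the acceptance
   probability, and the conditional output distribution is w / \<Sum> w, which exceeds
   \<tau> nowhere outside B; this bounds the statistical distance by \<tau>(B). *)

lemma emeasure_uniform_atMost:
  fixes a c :: real
  assumes "0 \<le> a" "a \<le> c" "0 < c"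
  shows "emeasure (uniform_measure lborel {0..c}) {..a} = ennreal (a / c)"
proof -
  have "{0..c} \<inter> {..a} = {0..a}" using assms by auto
  then show ?thesis using assms by (simp add: divide_ennreal)
qed

lemma sets_exp_space: "sets (exp_space U \<Delta>) = sets (count_space UNIV \<Otimes>\<^sub>M (borel \<Otimes>\<^sub>M borel))"
  unfolding exp_space_def by (intro sets_pair_measure_cong) auto

text \<open>Events of the form "P u, alpha below a u, beta below b u": the acceptance events
  and the output events of the experiment all have this shape.\<close>
abbreviation rectangle_event :: "('a \<Rightarrow> bool) \<Rightarrow> ('a \<Rightarrow> real) \<Rightarrow> ('a \<Rightarrow> real) \<Rightarrow> ('a \<times> real \<times> real) set"
  where "rectangle_event P a b \<equiv> {(u, \<alpha>, \<beta>). P u \<and> \<alpha> \<le> a u \<and> \<beta> \<le> b u}"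

lemma rectangle_event_sets: "rectangle_event P a b \<in> sets (exp_space U \<Delta>)"
proof -
  let ?S = "count_space UNIV \<Otimes>\<^sub>M (borel \<Otimes>\<^sub>M borel) :: ('a \<times> real \<times> real) measure"
  have [measurable]: "(\<lambda>\<omega>. a (fst \<omega>)) \<in> borel_measurable ?S" "(\<lambda>\<omega>. b (fst \<omega>)) \<in> borel_measurable ?S"
    "Measurable.pred ?S (\<lambda>\<omega>. P (fst \<omega>))"
    by (rule measurable_compose[OF measurable_fst], simp)+
  have "rectangle_event P a b = {\<omega> \<in> space ?S.
      P (fst \<omega>) \<and> fst (snd \<omega>) \<le> a (fst \<omega>) \<and> snd (snd \<omega>) \<le> b (fst \<omega>)}"
    by (auto simp: space_pair_measure)
  also have "\<dots> \<in> sets ?S" by measurable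
  finally show ?thesis by (simp add: sets_exp_space)
qed

lemma emeasure_uniform_square_quadrant:
  fixes x y c :: real
  assumes "0 \<le> x" "x \<le> c" "0 \<le> y" "y \<le> c" "0 < c"
  defines "V \<equiv> uniform_measure lborel {0..c}"
  shows "emeasure (V \<Otimes>\<^sub>M V) ({..x} \<times> {..y}) = ennreal (x * y / c\<^sup>2)"
proof -
  interpret V: prob_space V
    unfolding V_def using \<open>0 < c\<close> by (intro prob_space_uniform_measure) auto
  have "emeasure (V \<Otimes>\<^sub>M V) ({..x} \<times> {..y}) = emeasure V {..x} * emeasure V {..y}"
    by (intro V.emeasure_pair_measure_Times) (simp_all add: V_def)
  also have "\<dots> = ennreal (x / c) * ennreal (y / c)"
    unfolding V_def using assms by (simp only: emeasure_uniform_atMost)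
  also have "\<dots> = ennreal (x * y / c\<^sup>2)"
    using assms by (simp add: ennreal_mult[symmetric] power2_eq_square)
  finally show ?thesis .
qed

text \<open>Main computation: a rectangle event has probability
  (\<Sum>u\<in>U with P u. a u * b u) / (|U| c^2), by integrating the quadrant
  probabilities over the uniform choice of u.\<close>
lemma measure_rectangle_event:
  fixes U :: "'a set" and a b :: "'a \<Rightarrow> real"
  assumes U: "finite U" "U \<noteq> {}"
    and bounds: "\<forall>u\<in>U. 0 \<le> a u \<and> a u \<le> 2 powr \<Delta> \<and> 0 \<le> b u \<and> b u \<le> 2 powr \<Delta>"
  shows "measure (exp_space U \<Delta>) (rectangle_event P a b)
       = (\<Sum>u\<in>{u\<in>U. P u}. a u * b u) / (card U * (2 powr \<Delta>)\<^sup>2)"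
proof -
  define c where "c = 2 powr \<Delta>"
  define V where "V = uniform_measure lborel {0..c}"
  have c: "0 < c" unfolding c_def by simp
  interpret V: prob_space V
    unfolding V_def using c by (intro prob_space_uniform_measure) auto
  interpret VV: prob_space "V \<Otimes>\<^sub>M V" by (intro prob_space_pair V.prob_space_axioms)
  let ?w = "\<lambda>u. if P u then a u * b u / c\<^sup>2 else 0"
  have space: "exp_space U \<Delta> = measure_pmf (pmf_of_set U) \<Otimes>\<^sub>M (V \<Otimes>\<^sub>M V)"
    unfolding exp_space_def V_def c_def ..
  have slice: "emeasure (V \<Otimes>\<^sub>M V) (Pair u -` rectangle_event P a b) = ennreal (?w u)"
    if "u \<in> U" for u
  proof (cases "P u")
    case True
    then have "Pair u -` rectangle_event P a b = {..a u} \<times> {..b u}" by auto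
    then show ?thesis
      using True bounds that c unfolding V_def c_def by (simp add: emeasure_uniform_square_quadrant)
  qed simp
  have "emeasure (exp_space U \<Delta>) (rectangle_event P a b)
      = (\<integral>\<^sup>+u. emeasure (V \<Otimes>\<^sub>M V) (Pair u -` rectangle_event P a b) \<partial>measure_pmf (pmf_of_set U))"
    using rectangle_event_sets[of P a b U \<Delta>] unfolding space
    by (intro VV.emeasure_pair_measure_alt)
  also have "\<dots> = (\<Sum>u\<in>U. ennreal (?w u)) / card U"
    using U slice by (simp add: nn_integral_pmf_of_set)
  also have "\<dots> = ennreal (sum ?w U) / card U"
    using bounds by (subst sum_ennreal) auto
  finally have "measure (exp_space U \<Delta>) (rectangle_event P a b) = sum ?w U / card U"
    using U bounds
    by (simp add: measure_def divide_ennreal ennreal_of_nat_eq_real_of_nat card_gt_0_iff sum_nonneg)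
  also have "sum ?w U = (\<Sum>u\<in>{u\<in>U. P u}. a u * b u) / c\<^sup>2"
    using U by (simp add: sum.If_cases sum_divide_distrib Int_def conj_commute)
  finally show ?thesis by (simp add: c_def mult.commute)
qed

text \<open>A single party accepts when alpha \<le> p u and beta \<le> c q u (or the mirrored
  condition); if p q is a probability distribution this happens with probability
  c / (|U| c^2) = 1 / (|U| c).\<close>
lemma single_party_acceptance:
  fixes U :: "'a set" and p q :: "'a \<Rightarrow> real"
  assumes U: "finite U" "U \<noteq> {}" and "0 \<le> \<Delta>"
    and range: "\<forall>u\<in>U. 0 \<le> p u \<and> p u \<le> 1 \<and> 0 \<le> q u \<and> q u \<le> 1"
    and distr: "is_distr U (\<lambda>u. p u * q u)"
  shows "measure (exp_space U \<Delta>) {(u, \<alpha>, \<beta>). \<alpha> \<le> p u \<and> \<beta> \<le> 2 powr \<Delta> * q u}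
           = 1 / (card U * 2 powr \<Delta>)"
    and "measure (exp_space U \<Delta>) {(u, \<alpha>, \<beta>). \<alpha> \<le> 2 powr \<Delta> * q u \<and> \<beta> \<le> p u}
           = 1 / (card U * 2 powr \<Delta>)"
proof -
  define c where "c = 2 powr \<Delta>"
  have "1 \<le> c" unfolding c_def using \<open>0 \<le> \<Delta>\<close> by (intro ge_one_powr_ge_zero) auto
  then have bounds: "\<forall>u\<in>U. 0 \<le> p u \<and> p u \<le> c \<and> 0 \<le> c * q u \<and> c * q u \<le> c"
    using range by (auto intro: order.trans mult_left_le)
  have "(\<Sum>u\<in>U. p u * (c * q u)) = c * (\<Sum>u\<in>U. p u * q u)"
    by (simp add: sum_distrib_left algebra_simps)
  also have "\<dots> = c" using distr unfolding is_distr_def by simp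
  finally have mass: "(\<Sum>u\<in>U. p u * (c * q u)) / (card U * c\<^sup>2) = 1 / (card U * c)"
    using \<open>1 \<le> c\<close> by (simp add: power2_eq_square)
  show "measure (exp_space U \<Delta>) {(u, \<alpha>, \<beta>). \<alpha> \<le> p u \<and> \<beta> \<le> 2 powr \<Delta> * q u}
      = 1 / (card U * 2 powr \<Delta>)"
    using measure_rectangle_event[OF U, where a = p and b = "\<lambda>u. c * q u" and P = "\<lambda>_. True"] bounds mass
    by (simp add: c_def)
  show "measure (exp_space U \<Delta>) {(u, \<alpha>, \<beta>). \<alpha> \<le> 2 powr \<Delta> * q u \<and> \<beta> \<le> p u}
      = 1 / (card U * 2 powr \<Delta>)"
    using measure_rectangle_event[OF U, where a = "\<lambda>u. c * q u" and b = p and P = "\<lambda>_. True"] bounds mass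
    by (simp add: c_def mult.commute)
qed

text \<open>Both parties accept iff alpha \<le> min (pA u) (c qB u) and beta \<le> min (c qA u) (pB u);
  the product of these two thresholds is the (unnormalised) weight of output u.\<close>
definition accept_weight ::
    "real \<Rightarrow> ('a \<Rightarrow> real) \<Rightarrow> ('a \<Rightarrow> real) \<Rightarrow> ('a \<Rightarrow> real) \<Rightarrow> ('a \<Rightarrow> real) \<Rightarrow> 'a \<Rightarrow> real" where
  "accept_weight \<Delta> pA qA pB qB u = min (pA u) (2 powr \<Delta> * qB u) * min (2 powr \<Delta> * qA u) (pB u)"

lemma exp_acc_rectangle:
  "exp_acc \<Delta> pA qA pB qB =
     rectangle_event (\<lambda>_. True) (\<lambda>u. min (pA u) (2 powr \<Delta> * qB u)) (\<lambda>u. min (2 powr \<Delta> * qA u) (pB u))"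
  unfolding exp_acc_def alice_acc_def bob_acc_def by auto

lemma exp_output_rectangle:
  "{\<omega> \<in> space (exp_space U \<Delta>). exp_output \<Delta> pA qA pB qB \<omega> = Some v} =
     rectangle_event (\<lambda>u. u = v) (\<lambda>u. min (pA u) (2 powr \<Delta> * qB u)) (\<lambda>u. min (2 powr \<Delta> * qA u) (pB u))"
  unfolding exp_output_def exp_acc_rectangle
  by (auto simp: exp_space_def space_pair_measure)

lemma joint_acceptance:
  fixes U :: "'a set" and pA qA pB qB :: "'a \<Rightarrow> real"
  assumes U: "finite U" "U \<noteq> {}" and "0 \<le> \<Delta>"
    and range: "\<forall>u\<in>U. 0 \<le> pA u \<and> pA u \<le> 1 \<and> 0 \<le> qA u \<and> 0 \<le> pB u \<and> pB u \<le> 1 \<and> 0 \<le> qB u"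
  defines "w \<equiv> accept_weight \<Delta> pA qA pB qB"
  shows "measure (exp_space U \<Delta>) (exp_acc \<Delta> pA qA pB qB) = sum w U / (card U * 2 powr (2 * \<Delta>))"
    and "v \<in> U \<Longrightarrow> cond_output U \<Delta> pA qA pB qB v = w v / sum w U"
proof -
  have "1 \<le> 2 powr \<Delta>" using \<open>0 \<le> \<Delta>\<close> by (intro ge_one_powr_ge_zero) auto
  then have bounds: "\<forall>u\<in>U. 0 \<le> min (pA u) (2 powr \<Delta> * qB u) \<and> min (pA u) (2 powr \<Delta> * qB u) \<le> 2 powr \<Delta>
      \<and> 0 \<le> min (2 powr \<Delta> * qA u) (pB u) \<and> min (2 powr \<Delta> * qA u) (pB u) \<le> 2 powr \<Delta>"
    using range by auto
  have square: "2 powr (2 * \<Delta>) = (2 powr \<Delta>)\<^sup>2"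
    by (simp add: power2_eq_square powr_add[symmetric])
  show acc: "measure (exp_space U \<Delta>) (exp_acc \<Delta> pA qA pB qB) = sum w U / (card U * 2 powr (2 * \<Delta>))"
    using measure_rectangle_event[OF U bounds, of "\<lambda>_. True"]
    unfolding exp_acc_rectangle square w_def accept_weight_def by simp
  assume "v \<in> U"
  then have "{u \<in> U. u = v} = {v}" by auto
  then have "measure (exp_space U \<Delta>)
        {\<omega> \<in> space (exp_space U \<Delta>). exp_output \<Delta> pA qA pB qB \<omega> = Some v}
      = w v / (card U * 2 powr (2 * \<Delta>))"
    using measure_rectangle_event[OF U bounds, of "\<lambda>u. u = v"]
    unfolding exp_output_rectangle square w_def accept_weight_def by simp
  then show "cond_output U \<Delta> pA qA pB qB v = w v / sum w U"
    unfolding cond_output_def acc using U by (simp add: card_gt_0_iff)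
qed

text \<open>Capping the thresholds can only lower the product, so 0 \<le> w u \<le> \<tau> u = pA pB.\<close>
lemma min_product_bounds:
  fixes pa qa pb qb c :: real
  assumes "0 \<le> pa" "0 \<le> qa" "0 \<le> pb" "0 \<le> qb" "0 \<le> c"
  shows "0 \<le> min pa (c * qb) * min (c * qa) pb"
    and "min pa (c * qb) * min (c * qa) pb \<le> pa * pb"
  using assms by (auto intro: mult_mono)

text \<open>Outside the bad sets the caps are inactive: if pa pb \<le> c pa qa and pa pb \<le> c pb qb
  then min pa (c qb) = pa and min (c qa) pb = pb whenever pa pb > 0.\<close>
lemma min_product_eq_if_good:
  fixes pa qa pb qb c :: real
  assumes "0 \<le> pa" "0 \<le> qa" "0 \<le> pb" "0 \<le> qb" "0 \<le> c"
    and goodA: "pa * pb \<le> c * (pa * qa)" and goodB: "pa * pb \<le> c * (pb * qb)"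
  shows "min pa (c * qb) * min (c * qa) pb = pa * pb"
proof (cases "pa = 0 \<or> pb = 0")
  case True
  then show ?thesis using assms by auto
next
  case False
  then have "0 < pa" "0 < pb" using assms by auto
  then have "pb \<le> c * qa" "pa \<le> c * qb"
    using goodA goodB by (simp_all add: algebra_simps)
  then show ?thesis by simp
qed

lemma sum_ge_off_exceptional:
  fixes w \<tau> :: "'a \<Rightarrow> real"
  assumes "finite U" "B \<subseteq> U" "\<forall>u\<in>U. 0 \<le> w u" "\<forall>u\<in>U - B. w u = \<tau> u"
  shows "sum \<tau> U - sum \<tau> B \<le> sum w U"
proof -
  have "sum \<tau> U - sum \<tau> B = sum \<tau> (U - B)" using assms(1,2) by (simp add: sum_diff)
  also have "\<dots> = sum w (U - B)" using assms(4) by simp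
  also have "\<dots> \<le> sum w U" using assms(1,3) by (intro sum_mono2) auto
  finally show ?thesis .
qed

text \<open>Statistical distance after renormalising: if 0 \<le> w \<le> \<tau> with w = \<tau> off B and
  0 < \<Sum> w \<le> 1, then w / \<Sum> w is at least \<tau> off B, so only B contributes to
  the distance from \<tau>, which is therefore at most \<tau>(B).\<close>
lemma stat_dist_renormalised_le:
  fixes w \<tau> \<mu> :: "'a \<Rightarrow> real"
  assumes "finite U" "B \<subseteq> U"
    and w: "\<forall>u\<in>U. 0 \<le> w u \<and> w u \<le> \<tau> u" "\<forall>u\<in>U - B. w u = \<tau> u"
    and mass: "0 < sum w U" "sum w U \<le> 1"
    and \<mu>: "\<forall>u\<in>U. \<mu> u = w u / sum w U"
  shows "stat_dist U \<tau> \<mu> \<le> sum \<tau> B"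
proof -
  have pointwise: "\<tau> u - \<mu> u \<le> (if u \<in> B then \<tau> u else 0)" if "u \<in> U" for u
  proof (cases "u \<in> B")
    case True
    then show ?thesis using that w(1) \<mu> mass by simp
  next
    case False
    have "0 \<le> \<tau> u" using that w(1) by (meson order.trans)
    then have "\<tau> u * sum w U \<le> \<tau> u" by (rule mult_left_le[OF mass(2)])
    then have "\<tau> u \<le> \<tau> u / sum w U" using mass(1) by (simp add: le_divide_eq)
    then show ?thesis using False that w(2) \<mu> by simp
  qed
  have "sum \<tau> T - sum \<mu> T \<le> sum \<tau> B" if "T \<subseteq> U" for T
  proof -
    have fin: "finite T" using that \<open>finite U\<close> by (rule finite_subset)
    have "sum \<tau> T - sum \<mu> T \<le> (\<Sum>u\<in>T. if u \<in> B then \<tau> u else 0)"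
      unfolding sum_subtractf[symmetric] using that by (intro sum_mono pointwise) blast
    also have "\<dots> = sum \<tau> (T \<inter> B)" using fin by (simp add: sum.inter_restrict)
    also have "\<dots> \<le> sum \<tau> B"
      using assms(1,2) w(1) by (intro sum_mono2) (auto intro: finite_subset order.trans)
    finally show ?thesis .
  qed
  then show ?thesis unfolding stat_dist_def using \<open>finite U\<close> by (subst Max_le_iff) auto
qed

theorem claim4p1:
  fixes U :: "'a set" and pA qA pB qB :: "'a \<Rightarrow> real" and \<Delta> :: real
  assumes "finite U" and "U \<noteq> {}"
    and "\<forall>u\<in>U. 0 \<le> pA u \<and> pA u \<le> 1" and "\<forall>u\<in>U. 0 \<le> qA u \<and> qA u \<le> 1"
    and "\<forall>u\<in>U. 0 \<le> pB u \<and> pB u \<le> 1" and "\<forall>u\<in>U. 0 \<le> qB u \<and> qB u \<le> 1"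
    and "is_distr U (\<lambda>u. pA u * pB u)"
    and "is_distr U (\<lambda>u. pA u * qA u)"
    and "is_distr U (\<lambda>u. pB u * qB u)"
    and "\<Delta> > 0"
  defines "\<tau> \<equiv> (\<lambda>u. pA u * pB u)"
    and "\<nu>A \<equiv> (\<lambda>u. pA u * qA u)"
    and "\<nu>B \<equiv> (\<lambda>u. pB u * qB u)"
    and "M \<equiv> exp_space U \<Delta>"
  defines "\<gamma> \<equiv> sum \<tau> (Bad U \<Delta> \<tau> \<nu>A \<union> Bad U \<Delta> \<tau> \<nu>B)"
  shows "measure M (alice_acc \<Delta> pA qA) = 1 / (card U * 2 powr \<Delta>)
         \<and> measure M (bob_acc \<Delta> pB qB) = 1 / (card U * 2 powr \<Delta>)
         \<and> measure M (exp_acc \<Delta> pA qA pB qB) \<le> 1 / (card U * 2 powr (2 * \<Delta>))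
         \<and> (1 - \<gamma>) / (card U * 2 powr (2 * \<Delta>)) \<le> measure M (exp_acc \<Delta> pA qA pB qB)
         \<and> (measure M (exp_acc \<Delta> pA qA pB qB) > 0 \<longrightarrow>
              stat_dist U \<tau> (cond_output U \<Delta> pA qA pB qB) \<le> \<gamma>)"
proof -
  define B where "B = Bad U \<Delta> \<tau> \<nu>A \<union> Bad U \<Delta> \<tau> \<nu>B"
  define w where "w = accept_weight \<Delta> pA qA pB qB"
  define N where "N = card U * 2 powr (2 * \<Delta>)"
  have U: "finite U" "U \<noteq> {}" and "0 \<le> \<Delta>" and "B \<subseteq> U" and "0 < N"
    using assms(1,2,10) by (auto simp: B_def Bad_def N_def card_gt_0_iff)
  have range: "\<forall>u\<in>U. 0 \<le> pA u \<and> pA u \<le> 1 \<and> 0 \<le> qA u \<and> 0 \<le> pB u \<and> pB u \<le> 1 \<and> 0 \<le> qB u"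
    using assms(3-6) by auto
  have w_le: "\<forall>u\<in>U. 0 \<le> w u \<and> w u \<le> \<tau> u"
    using assms(3-6) min_product_bounds by (simp add: w_def accept_weight_def \<tau>_def)
  have w_good: "\<forall>u\<in>U - B. w u = \<tau> u"
    using assms(3-6) min_product_eq_if_good
    by (auto simp: w_def accept_weight_def \<tau>_def \<nu>A_def \<nu>B_def B_def Bad_def not_less)
  have sum_\<tau>: "sum \<tau> U = 1" using assms(7) unfolding is_distr_def \<tau>_def by simp
  have mass_le: "sum w U \<le> 1" using w_le sum_mono[of U w \<tau>] sum_\<tau> by auto
  have mass_ge: "1 - \<gamma> \<le> sum w U"
    using sum_ge_off_exceptional[OF U(1) \<open>B \<subseteq> U\<close>, where w = w and \<tau> = \<tau>] w_le w_good sum_\<tau>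
    unfolding \<gamma>_def B_def[symmetric] by auto
  have acc: "measure M (exp_acc \<Delta> pA qA pB qB) = sum w U / N"
    using joint_acceptance(1)[OF U \<open>0 \<le> \<Delta>\<close> range] unfolding w_def N_def M_def .
  then have bounds: "measure M (exp_acc \<Delta> pA qA pB qB) \<le> 1 / N"
      "(1 - \<gamma>) / N \<le> measure M (exp_acc \<Delta> pA qA pB qB)"
    using mass_le mass_ge \<open>0 < N\<close> by (simp_all add: divide_right_mono)
  have "stat_dist U \<tau> (cond_output U \<Delta> pA qA pB qB) \<le> \<gamma>"
    if "measure M (exp_acc \<Delta> pA qA pB qB) > 0"
    using stat_dist_renormalised_le[OF U(1) \<open>B \<subseteq> U\<close> w_le w_good] that mass_le
      joint_acceptance(2)[OF U \<open>0 \<le> \<Delta>\<close> range, folded w_def]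
    unfolding acc \<gamma>_def B_def[symmetric] using \<open>0 < N\<close> by (simp add: zero_less_divide_iff)
  then show ?thesis
    using bounds single_party_acceptance[OF U \<open>0 \<le> \<Delta>\<close>] assms(3-9)
    unfolding M_def N_def alice_acc_def bob_acc_def by auto
qed

end
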